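(* Let $\Omega=\{1,\ldots,n\}$, $k\in\Omega$, and let $\phi$ be a generalized metric satisfying convexity: for all distributions $p_1,p_2,q_1,q_2$ on a common finite set and $\lambda\in[0,1]$, $\phi(\lambda p_1+(1-\lambda)p_2\|\lambda q_1+(1-\lambda)q_2)\le\lambda\phi(p_1\|q_1)+(1-\lambda)\phi(p_2\|q_2)$. Then for all $\Omega$-point distributions $p_1,p_2,q_1,q_2$ and $\lambda\in[0,1]$, $\widehat{\phi}_k(\lambda p_1+(1-\lambda)p_2\|\lambda q_1+(1-\lambda)q_2)\le\lambda\widehat{\phi}_k(p_1\|q_1)+(1-\lambda)\widehat{\phi}_k(p_2\|q_2)$.
   Context: An $\Omega$-point distribution is a probability vector on $\Omega$. $\phi$ assigns a real number $\phi(p\|q)$ to each pair of probability distributions on the same finite set. $\mathcal P_k(\Omega)$ is the set of partitions of $\Omega$ into exactly $k$ nonempty disjoint cells; for $\rho\in\mathcal P_k(\Omega)$, $\widehat p_\rho(a)=\sum_{i\in a}p(i)$ for $a\in\rho$. The Sketch $\star$-metric is $\widehat{\phi}_k(p\|q)=\max_{\rho\in\mathcal P_k(\Omega)}\phi(\widehat p_\rho\|\widehat q_\rho)$. *)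

theory Defs
  imports Complex_Main "HOL-Library.Disjoint_Sets"
begin

definition prob_dist :: "'a set \<Rightarrow> ('a \<Rightarrow> real) \<Rightarrow> bool" where
  "prob_dist A p \<longleftrightarrow> finite A \<and> (\<forall>i\<in>A. 0 \<le> p i) \<and> sum p A = 1 \<and> (\<forall>i. i \<notin> A \<longrightarrow> p i = 0)"

definition partitions_k :: "'a set \<Rightarrow> nat \<Rightarrow> 'a set set set" where
  "partitions_k \<Omega> k = {\<rho>. partition_on \<Omega> \<rho> \<and> card \<rho> = k}"

definition coarsen :: "'a set set \<Rightarrow> ('a \<Rightarrow> real) \<Rightarrow> ('a set \<Rightarrow> real)" where
  "coarsen \<rho> p = (\<lambda>a. if a \<in> \<rho> then sum p a else 0)"

text \<open>Sketch star-metric. phi A p q is the value of phi for distributions p, q on the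
  finite carrier A.\<close>
definition sketch :: "('a set set \<Rightarrow> ('a set \<Rightarrow> real) \<Rightarrow> ('a set \<Rightarrow> real) \<Rightarrow> real)
    \<Rightarrow> 'a set \<Rightarrow> nat \<Rightarrow> ('a \<Rightarrow> real) \<Rightarrow> ('a \<Rightarrow> real) \<Rightarrow> real" where
  "sketch \<phi> \<Omega> k p q = Max ((\<lambda>\<rho>. \<phi> \<rho> (coarsen \<rho> p) (coarsen \<rho> q)) ` partitions_k \<Omega> k)"

end

theory Submission
  imports Defs
begin

text \<open>Coarsening along a partition is linear, so a convex combination of distributions
  coarsens to the same convex combination of the coarsened distributions. Convexity of
  \<open>\<phi>\<close> on each fixed partition therefore bounds every term of the maximum defining the
  sketch metric, and a maximum of pointwise convexly bounded terms is bounded by the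
  convex combination of the maxima.\<close>

lemma finite_partitions_k: "finite \<Omega> \<Longrightarrow> finite (partitions_k \<Omega> k)"
  unfolding partitions_k_def
  by (rule finite_subset[of _ "Pow (Pow \<Omega>)"]) (auto simp: partition_on_def)

lemma prob_dist_coarsen:
  assumes p: "prob_dist \<Omega> p" and \<rho>: "partition_on \<Omega> \<rho>"
  shows "prob_dist \<rho> (coarsen \<rho> p)"
proof -
  have "finite \<Omega>" using p by (simp add: prob_dist_def)
  have cover: "\<Union>\<rho> = \<Omega>" and disj: "disjoint \<rho>" using \<rho> by (auto simp: partition_on_def)
  have "finite \<rho>" using \<open>finite \<Omega>\<close> cover by (metis finite_UnionD)
  have cells_finite: "\<forall>a\<in>\<rho>. finite a" using \<open>finite \<Omega>\<close> cover by (meson Union_upper finite_subset)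
  have "sum (coarsen \<rho> p) \<rho> = sum (sum p) \<rho>" by (simp add: coarsen_def)
  also have "\<dots> = sum p (\<Union>\<rho>)"
    using cells_finite disj by (subst sum.Union_disjoint) (auto simp: disjoint_def)
  also have "\<dots> = 1" using cover p by (simp add: prob_dist_def)
  finally have "sum (coarsen \<rho> p) \<rho> = 1" .
  moreover have "\<forall>a\<in>\<rho>. 0 \<le> coarsen \<rho> p a"
    using p cover by (auto simp: coarsen_def prob_dist_def intro!: sum_nonneg)
  ultimately show ?thesis using \<open>finite \<rho>\<close> by (auto simp: prob_dist_def coarsen_def)
qed

lemma coarsen_convex_comb:
  "coarsen \<rho> (\<lambda>x. t * p1 x + (1 - t) * p2 x)
     = (\<lambda>a. t * coarsen \<rho> p1 a + (1 - t) * coarsen \<rho> p2 a)"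
  by (auto simp: coarsen_def sum.distrib sum_distrib_left)

lemma Max_image_le_convex_comb:
  fixes f g h :: "'a \<Rightarrow> real"
  assumes "finite S" "S \<noteq> {}" "0 \<le> t" "t \<le> 1"
    and bound: "\<And>x. x \<in> S \<Longrightarrow> f x \<le> t * g x + (1 - t) * h x"
  shows "Max (f ` S) \<le> t * Max (g ` S) + (1 - t) * Max (h ` S)"
proof -
  have "Max (f ` S) \<in> f ` S" using assms(1,2) by (intro Max_in) auto
  then obtain x where "x \<in> S" and max_at_x: "Max (f ` S) = f x" by auto
  note max_at_x
  also have "f x \<le> t * g x + (1 - t) * h x" using bound \<open>x \<in> S\<close> .
  also have "\<dots> \<le> t * Max (g ` S) + (1 - t) * Max (h ` S)"
    using assms(1,3,4) \<open>x \<in> S\<close> by (intro add_mono mult_left_mono Max_ge) auto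
  finally show ?thesis .
qed

lemma sketch_convex:
  fixes \<phi> :: "'a set set \<Rightarrow> ('a set \<Rightarrow> real) \<Rightarrow> ('a set \<Rightarrow> real) \<Rightarrow> real"
  assumes convex: "\<And>A P1 P2 Q1 Q2 \<mu>. finite A \<Longrightarrow>
      prob_dist A P1 \<Longrightarrow> prob_dist A P2 \<Longrightarrow> prob_dist A Q1 \<Longrightarrow> prob_dist A Q2 \<Longrightarrow>
      0 \<le> \<mu> \<Longrightarrow> \<mu> \<le> 1 \<Longrightarrow>
      \<phi> A (\<lambda>x. \<mu> * P1 x + (1 - \<mu>) * P2 x) (\<lambda>x. \<mu> * Q1 x + (1 - \<mu>) * Q2 x)
        \<le> \<mu> * \<phi> A P1 Q1 + (1 - \<mu>) * \<phi> A P2 Q2"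
    and p1: "prob_dist \<Omega> p1" and p2: "prob_dist \<Omega> p2"
    and q1: "prob_dist \<Omega> q1" and q2: "prob_dist \<Omega> q2"
    and t: "0 \<le> t" "t \<le> 1"
  shows "sketch \<phi> \<Omega> k (\<lambda>x. t * p1 x + (1 - t) * p2 x) (\<lambda>x. t * q1 x + (1 - t) * q2 x)
    \<le> t * sketch \<phi> \<Omega> k p1 q1 + (1 - t) * sketch \<phi> \<Omega> k p2 q2"
proof (cases "partitions_k \<Omega> k = {}")
  case True
  \<comment> \<open>Every sketch value is then the same unspecified \<open>Max {}\<close>.\<close>
  then show ?thesis by (simp add: sketch_def algebra_simps)
next
  case False
  have "finite (partitions_k \<Omega> k)"
    using p1 by (intro finite_partitions_k) (simp add: prob_dist_def)
  then show ?thesis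
    unfolding sketch_def
  proof (rule Max_image_le_convex_comb[OF _ False t])
    fix \<rho> assume "\<rho> \<in> partitions_k \<Omega> k"
    then have \<rho>: "partition_on \<Omega> \<rho>" by (simp add: partitions_k_def)
    note dists = prob_dist_coarsen[OF p1 \<rho>] prob_dist_coarsen[OF p2 \<rho>]
      prob_dist_coarsen[OF q1 \<rho>] prob_dist_coarsen[OF q2 \<rho>]
    have "finite \<rho>" using dists(1) by (simp add: prob_dist_def)
    show "\<phi> \<rho> (coarsen \<rho> (\<lambda>x. t * p1 x + (1 - t) * p2 x))
            (coarsen \<rho> (\<lambda>x. t * q1 x + (1 - t) * q2 x))
          \<le> t * \<phi> \<rho> (coarsen \<rho> p1) (coarsen \<rho> q1)
            + (1 - t) * \<phi> \<rho> (coarsen \<rho> p2) (coarsen \<rho> q2)"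
      unfolding coarsen_convex_comb by (rule convex[OF \<open>finite \<rho>\<close> dists t])
  qed
qed

theorem lemma6:
  fixes \<phi> :: "nat set set \<Rightarrow> (nat set \<Rightarrow> real) \<Rightarrow> (nat set \<Rightarrow> real) \<Rightarrow> real"
    and n k :: nat and p1 p2 q1 q2 :: "nat \<Rightarrow> real" and t :: real
  assumes convex: "\<And>A P1 P2 Q1 Q2 \<mu>. finite A \<Longrightarrow>
      prob_dist A P1 \<Longrightarrow> prob_dist A P2 \<Longrightarrow> prob_dist A Q1 \<Longrightarrow> prob_dist A Q2 \<Longrightarrow>
      0 \<le> \<mu> \<Longrightarrow> \<mu> \<le> 1 \<Longrightarrow>
      \<phi> A (\<lambda>x. \<mu> * P1 x + (1 - \<mu>) * P2 x) (\<lambda>x. \<mu> * Q1 x + (1 - \<mu>) * Q2 x)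
        \<le> \<mu> * \<phi> A P1 Q1 + (1 - \<mu>) * \<phi> A P2 Q2"
    and k: "k \<in> {1..n}"
    and p1: "prob_dist {1..n} p1" and p2: "prob_dist {1..n} p2"
    and q1: "prob_dist {1..n} q1" and q2: "prob_dist {1..n} q2"
    and lam: "0 \<le> t" "t \<le> 1"
  shows "sketch \<phi> {1..n} k (\<lambda>x. t * p1 x + (1 - t) * p2 x) (\<lambda>x. t * q1 x + (1 - t) * q2 x)
    \<le> t * sketch \<phi> {1..n} k p1 q1 + (1 - t) * sketch \<phi> {1..n} k p2 q2"
  by (rule sketch_convex[where \<phi> = \<phi>, OF convex p1 p2 q1 q2 lam])

end
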